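(* Let $G=(V,E)$ be a simple undirected graph with vertex set $V$ and edge set $E$, let $A$ be its vertex-edge incidence matrix, and let $k>4$ be an integer. Suppose every connected component of $G$ has at least four vertices, $|E| = \binom{k}{2}$, and $\operatorname{rank}(A) = k$. Then $G$ has exactly $|V| = k$ vertices.
   Context: The vertex-edge incidence matrix $A$ of $G$ has rows indexed by $V$ and columns indexed by $E$, with entry $a_{ie} = 1$ if vertex $i$ is an endpoint of edge $e$ and $0$ otherwise; its rank is taken over the real (equivalently rational) numbers. *)

theory Defs
  imports "HOL-Analysis.Analysis"
begin

text \<open>A simple undirected graph on the finite vertex type 'v (V = UNIV):
  the edge set E is a set of 2-element vertex sets.\<close>
definition simple_graph :: "'v set set \<Rightarrow> bool" where
  "simple_graph E \<longleftrightarrow> (\<forall>e\<in>E. card e = 2)"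

definition adjacent :: "'v set set \<Rightarrow> 'v \<Rightarrow> 'v \<Rightarrow> bool" where
  "adjacent E u v \<longleftrightarrow> {u, v} \<in> E"

definition component :: "'v set set \<Rightarrow> 'v \<Rightarrow> 'v set" where
  "component E v = {u. (adjacent E)\<^sup>*\<^sup>* v u}"

definition incidence_col :: "'v::finite set \<Rightarrow> real ^ 'v" where
  "incidence_col e = (\<chi> i. if i \<in> e then 1 else 0)"

text \<open>Rank (over the reals) of the incidence matrix = dimension of its column space.\<close>
definition incidence_rank :: "'v::finite set set \<Rightarrow> nat" where
  "incidence_rank E = dim (incidence_col ` E)"

end

theory Submission
  imports Defs
begin

text \<open>Let \<open>y\<close> be orthogonal to all columns of \<open>A\<close>. Then \<open>y\<close> changes sign along every
  edge, so on each component it is either identically zero or nowhere zero, in which case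
  its sign bipartitions the component. Restricting \<open>y\<close> to one vertex per such component is
  injective, hence \<open>rank A \<ge> |V| - b\<close>, where \<open>b\<close> counts the components carrying a nonzero
  \<open>y\<close>; trivially \<open>rank A \<le> |V|\<close>. A component with \<open>c\<close> vertices has at most \<open>c\<^sup>2/4\<close> edges
  if it carries such a \<open>y\<close> and at most \<open>c(c-1)/2\<close> otherwise. If \<open>|V| > k\<close>, then \<open>b \<ge> 1\<close>,
  and since every component has at least four vertices these bounds add up to fewer than
  \<open>k(k-1)/2\<close> edges.\<close>

lemma symp_adjacent: "symp (adjacent E)"
  by (auto intro: sympI simp: adjacent_def insert_commute)

lemma component_refl: "u \<in> component E u"
  by (simp add: component_def)

lemma component_sym: "v \<in> component E u \<Longrightarrow> u \<in> component E v"
  using symp_rtranclp[OF symp_adjacent[of E]] by (simp add: component_def sympD)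

lemma component_eq:
  assumes "v \<in> component E u"
  shows "component E v = component E u"
  using assms component_sym[OF assms] by (auto simp: component_def intro: rtranclp_trans)

lemma edge_subset_component:
  assumes "simple_graph E" "e \<in> E" "u \<in> e"
  shows "e \<subseteq> component E u"
proof
  fix w assume "w \<in> e"
  obtain a b where "e = {a, b}"
    using assms(1,2) unfolding simple_graph_def card_2_iff by blast
  with assms(3) \<open>w \<in> e\<close> have "w = u \<or> e = {u, w}"
    by auto
  with assms(2) show "w \<in> component E u"
    unfolding component_def adjacent_def using r_into_rtranclp[of "adjacent E" u w] by auto
qed

definition graph_components :: "'v set set \<Rightarrow> 'v set set" where
  "graph_components E = range (component E)"

lemma graph_components_disjoint: "pairwise disjnt (graph_components E)"
proof (rule pairwiseI)
  fix C D assume "C \<in> graph_components E" "D \<in> graph_components E" "C \<noteq> D"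
  then obtain a b where ab: "C = component E a" "D = component E b"
    by (auto simp: graph_components_def)
  have "x \<notin> D" if "x \<in> C" for x
  proof
    assume "x \<in> D"
    with that ab have "C = component E x" "D = component E x"
      using component_eq by metis+
    with \<open>C \<noteq> D\<close> show False
      by simp
  qed
  then show "disjnt C D"
    by (auto simp: disjnt_def)
qed

lemma sum_card_graph_components:
  fixes E :: "'v::finite set set"
  shows "(\<Sum>C\<in>graph_components E. card C) = CARD('v)"
proof -
  have "\<Union>(graph_components E) = (UNIV :: 'v set)"
    using component_refl unfolding graph_components_def by (metis UNIV_eq_I UN_iff rangeI)
  moreover have "card (\<Union>(graph_components E)) = (\<Sum>C\<in>graph_components E. card C)"
    by (rule card_Union_disjoint[OF graph_components_disjoint]) simp
  ultimately show ?thesis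
    by simp
qed

definition edges_within :: "'v set set \<Rightarrow> 'v set \<Rightarrow> 'v set set" where
  "edges_within E C = {e \<in> E. e \<subseteq> C}"

lemma card_le_sum_edges_within:
  fixes E :: "'v::finite set set"
  assumes "simple_graph E"
  shows "card E \<le> (\<Sum>C\<in>graph_components E. card (edges_within E C))"
proof -
  have "E = (\<Union>C\<in>graph_components E. edges_within E C)"
  proof (intro equalityI subsetI)
    fix e assume "e \<in> E"
    moreover from this obtain u where "u \<in> e"
      using assms unfolding simple_graph_def by fastforce
    ultimately show "e \<in> (\<Union>C\<in>graph_components E. edges_within E C)"
      using edge_subset_component[OF assms]
      unfolding graph_components_def edges_within_def by blast
  qed (auto simp: edges_within_def)
  then have "card E = card (\<Union>C\<in>graph_components E. edges_within E C)"
    by (rule arg_cong)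
  also have "\<dots> \<le> (\<Sum>C\<in>graph_components E. card (edges_within E C))"
    by (rule card_UN_le) simp
  finally show ?thesis .
qed

lemma two_mult_choose_two: "2 * (n choose 2) = n * (n - 1)"
proof -
  have "even (n * (n - 1))"
    by (cases n) auto
  then show ?thesis
    by (simp add: choose_two)
qed

lemma card_edges_within_le:
  assumes "simple_graph E" "finite C"
  shows "2 * card (edges_within E C) \<le> card C * (card C - 1)"
proof -
  have "card (edges_within E C) \<le> card {D. D \<subseteq> C \<and> card D = 2}"
  proof (rule card_mono)
    show "finite {D. D \<subseteq> C \<and> card D = 2}"
      by (rule finite_subset[of _ "Pow C"]) (use assms(2) in auto)
    show "edges_within E C \<subseteq> {D. D \<subseteq> C \<and> card D = 2}"
      using assms(1) unfolding edges_within_def simple_graph_def by auto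
  qed
  also have "\<dots> = card C choose 2"
    by (rule n_subsets[OF assms(2)])
  finally show ?thesis
    using two_mult_choose_two[of "card C"] by linarith
qed

lemma card_edges_within_between:
  assumes "finite C" "C = P \<union> N" "P \<inter> N = {}"
    and "\<And>e. e \<in> edges_within E C \<Longrightarrow> \<exists>a\<in>P. \<exists>b\<in>N. e = {a, b}"
  shows "4 * card (edges_within E C) \<le> card C ^ 2"
proof -
  have fin: "finite P" "finite N"
    using assms(1,2) by auto
  have "edges_within E C \<subseteq> (\<lambda>(a, b). {a, b}) ` (P \<times> N)"
    using assms(4) by fastforce
  then have "card (edges_within E C) \<le> card ((\<lambda>(a, b). {a, b}) ` (P \<times> N))"
    using fin by (intro card_mono) auto
  also have "\<dots> \<le> card P * card N"
    using card_image_le card_cartesian_product fin by (metis finite_cartesian_product)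
  finally have "4 * card (edges_within E C) \<le> 4 * (card P * card N)"
    by simp
  also have "\<dots> \<le> (card P + card N) ^ 2"
  proof -
    have "4 * (int (card P) * int (card N)) \<le> (int (card P) + int (card N)) ^ 2"
      using zero_le_power2[of "int (card P) - int (card N)"]
      by (simp add: power2_eq_square algebra_simps)
    then show ?thesis
      by (simp flip: of_nat_mult of_nat_add of_nat_power)
  qed
  also have "card P + card N = card C"
    using assms(2,3) fin by (simp add: card_Un_disjoint)
  finally show ?thesis .
qed

lemma dim_orthogonal_comp_add_dim:
  fixes S :: "'a::euclidean_space set"
  shows "dim (S\<^sup>\<bottom>) + dim S = DIM('a)"
proof -
  have "S\<^sup>\<bottom> = {y \<in> UNIV. \<forall>x \<in> span S. orthogonal x y}"
  proof (intro equalityI subsetI)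
    fix y assume "y \<in> S\<^sup>\<bottom>"
    then have "\<forall>z \<in> S. orthogonal y z"
      by (simp add: orthogonal_comp_def orthogonal_commute)
    then have "orthogonal y x" if "x \<in> span S" for x
      using orthogonal_to_span[OF that] by blast
    then show "y \<in> {y \<in> UNIV. \<forall>x \<in> span S. orthogonal x y}"
      by (simp add: orthogonal_commute)
  qed (auto simp: orthogonal_comp_def intro: span_base)
  then show ?thesis
    using dim_subspace_orthogonal_to_vectors[OF subspace_span subspace_UNIV] by simp
qed

definition incidence_kernel :: "'v::finite set set \<Rightarrow> (real ^ 'v) set" where
  "incidence_kernel E = (incidence_col ` E)\<^sup>\<bottom>"

lemma incidence_rank_add_dim_kernel:
  fixes E :: "'v::finite set set"
  shows "incidence_rank E + dim (incidence_kernel E) = CARD('v)"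
  using dim_orthogonal_comp_add_dim[of "incidence_col ` E"]
  by (simp add: incidence_rank_def incidence_kernel_def)

lemma inner_incidence_col: "incidence_col e \<bullet> y = (\<Sum>i\<in>e. y $ i)"
proof -
  have "incidence_col e \<bullet> y = (\<Sum>i\<in>UNIV. if i \<in> e then y $ i else 0)"
    by (auto simp: incidence_col_def inner_vec_def intro!: sum.cong)
  then show ?thesis
    by (simp add: sum.If_cases)
qed

lemma incidence_kernel_edge:
  assumes "simple_graph E" "{u, v} \<in> E" "y \<in> incidence_kernel E"
  shows "y $ v = - y $ u"
proof -
  have "u \<noteq> v"
    using assms(1,2) by (force simp: simple_graph_def)
  moreover have "incidence_col {u, v} \<bullet> y = 0"
    using assms(2,3) by (simp add: incidence_kernel_def orthogonal_comp_def orthogonal_def)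
  ultimately show ?thesis
    by (simp add: inner_incidence_col)
qed

lemma incidence_kernel_abs_eq:
  assumes "simple_graph E" "y \<in> incidence_kernel E" "v \<in> component E u"
  shows "\<bar>y $ v\<bar> = \<bar>y $ u\<bar>"
proof -
  have "(adjacent E)\<^sup>*\<^sup>* u v"
    using assms(3) by (simp add: component_def)
  then show ?thesis
  proof (induction rule: rtranclp_induct)
    case (step v w)
    then show ?case
      using incidence_kernel_edge[OF assms(1) _ assms(2), of v w] by (simp add: adjacent_def)
  qed simp
qed

text \<open>These are precisely the bipartite components; the count of them is the defect
  \<open>|V| - rank A\<close>, but only the upper bound on the defect is needed.\<close>
definition kernel_components :: "'v::finite set set \<Rightarrow> 'v set set" where
  "kernel_components E =
    {C \<in> graph_components E. \<exists>y \<in> incidence_kernel E. \<exists>u \<in> C. y $ u \<noteq> 0}"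

lemma dim_le_card_of_vanishing_imp_zero:
  fixes W :: "(real ^ 'n) set"
  assumes "subspace W" "\<And>y. y \<in> W \<Longrightarrow> \<forall>i \<in> R. y $ i = 0 \<Longrightarrow> y = 0"
  shows "dim W \<le> card R"
proof -
  define f where "f y = (\<chi> i. if i \<in> R then y $ i else 0)" for y :: "real ^ 'n"
  have "linear f"
    by (rule linearI) (auto simp: f_def vec_eq_iff)
  have "inj_on f W"
    unfolding linear_inj_on_iff_eq_0[OF \<open>linear f\<close> assms(1)]
  proof (intro ballI impI)
    fix y assume "y \<in> W" "f y = 0"
    have "y $ i = 0" if "i \<in> R" for i
      using that arg_cong[OF \<open>f y = 0\<close>, of "\<lambda>x. x $ i"] by (simp add: f_def)
    then show "y = 0"
      using assms(2) \<open>y \<in> W\<close> by blast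
  qed
  then have "inj_on f (span W)"
    by (simp add: span_eq_iff[THEN iffD2, OF assms(1)])
  then have "dim W = dim (f ` W)"
    using dim_image_eq[OF \<open>linear f\<close>] by simp
  also have "\<dots> \<le> card ((\<lambda>i. axis i (1::real)) ` R)"
  proof (rule dim_le_card)
    show "f ` W \<subseteq> span ((\<lambda>i. axis i (1::real)) ` R)"
    proof
      fix x assume "x \<in> f ` W"
      then obtain y where "x = f y"
        by blast
      moreover have "f y = (\<Sum>i\<in>R. y $ i *\<^sub>R axis i 1)"
        by (auto simp: f_def vec_eq_iff axis_def if_distrib sum.If_cases cong: if_cong)
      ultimately show "x \<in> span ((\<lambda>i. axis i (1::real)) ` R)"
        by (auto intro: span_sum[OF span_scale[OF span_base]])
    qed
  qed simp
  also have "\<dots> \<le> card R"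
    by (rule card_image_le) simp
  finally show ?thesis .
qed

lemma dim_incidence_kernel_le:
  fixes E :: "'v::finite set set"
  assumes "simple_graph E"
  shows "dim (incidence_kernel E) \<le> card (kernel_components E)"
proof -
  define rep where "rep C = (SOME u. u \<in> C)" for C :: "'v set"
  have rep: "rep (component E u) \<in> component E u" for u
    unfolding rep_def using component_refl by (rule someI)
  have "dim (incidence_kernel E) \<le> card (rep ` kernel_components E)"
  proof (rule dim_le_card_of_vanishing_imp_zero)
    show "subspace (incidence_kernel E)"
      by (simp add: incidence_kernel_def subspace_orthogonal_comp)
    fix y assume y: "y \<in> incidence_kernel E"
      and vanish: "\<forall>i \<in> rep ` kernel_components E. y $ i = 0"
    have "y $ u = 0" for u
    proof (cases "component E u \<in> kernel_components E")
      case True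
      then have "y $ rep (component E u) = 0"
        using vanish by blast
      then show ?thesis
        using incidence_kernel_abs_eq[OF assms y rep[of u]] by simp
    next
      case False
      then show ?thesis
        using y component_refl[of u E] by (auto simp: kernel_components_def graph_components_def)
    qed
    then show "y = 0"
      by (simp add: vec_eq_iff)
  qed
  also have "\<dots> \<le> card (kernel_components E)"
    by (rule card_image_le) simp
  finally show ?thesis .
qed

lemma card_edges_within_kernel_component:
  assumes "simple_graph E" "C \<in> kernel_components E"
  shows "4 * card (edges_within E C) \<le> card C ^ 2"
proof -
  obtain v y w where C: "C = component E v" and y: "y \<in> incidence_kernel E"
    and "w \<in> C" "y $ w \<noteq> 0"
    using assms(2) by (auto simp: kernel_components_def graph_components_def)
  have nonzero: "y $ u \<noteq> 0" if "u \<in> C" for u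
  proof -
    have "\<bar>y $ u\<bar> = \<bar>y $ v\<bar>" "\<bar>y $ w\<bar> = \<bar>y $ v\<bar>"
      using incidence_kernel_abs_eq[OF assms(1) y] C that \<open>w \<in> C\<close> by simp_all
    with \<open>y $ w \<noteq> 0\<close> show ?thesis
      by auto
  qed
  define P where "P = {u \<in> C. y $ u > 0}"
  define N where "N = {u \<in> C. y $ u < 0}"
  show ?thesis
  proof (rule card_edges_within_between)
    show "C = P \<union> N" "P \<inter> N = {}"
      using nonzero by (force simp: P_def N_def)+
    fix e assume "e \<in> edges_within E C"
    then have "e \<in> E" "e \<subseteq> C"
      by (simp_all add: edges_within_def)
    moreover obtain a b where "e = {a, b}"
      using \<open>e \<in> E\<close> assms(1) unfolding simple_graph_def card_2_iff by blast
    ultimately have e: "e = {a, b}" "e \<in> E" "a \<in> C" "b \<in> C"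
      by auto
    then have opposite: "y $ b = - y $ a"
      using incidence_kernel_edge[OF assms(1) _ y] by simp
    show "\<exists>a\<in>P. \<exists>b\<in>N. e = {a, b}"
    proof (cases "y $ a > 0")
      case True
      then have "a \<in> P" "b \<in> N"
        using e opposite by (auto simp: P_def N_def)
      with e(1) show ?thesis
        by blast
    next
      case False
      then have "b \<in> P" "a \<in> N"
        using e opposite nonzero[of a] by (auto simp: P_def N_def)
      with e(1) show ?thesis
        by (metis insert_commute)
    qed
  qed simp
qed

text \<open>Merging two parts with \<open>t, s \<ge> 3\<close> gains \<open>4ts \<ge> 36\<close> in the quadratic bound,
  which pays for the extra slack \<open>4\<close> and the \<open>32\<close> charged per part.\<close>
lemma sum_le_of_quadratic_bounds:
  fixes t h :: "'a \<Rightarrow> int"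
  assumes "finite I" "\<And>i. i \<in> I \<Longrightarrow> t i \<ge> 3"
    and "\<And>i. i \<in> I \<Longrightarrow> h i \<le> 2 * t i * (t i - 1) + 4"
  shows "sum h I + 32 * int (card I) \<le> 2 * sum t I * (sum t I - 1) + 36"
  using assms
proof (induction I rule: finite_induct)
  case (insert x F)
  have hx: "h x \<le> 2 * t x * (t x - 1) + 4" and tx: "t x \<ge> 3"
    using insert.prems by auto
  show ?case
  proof (cases "F = {}")
    case False
    then obtain z where "z \<in> F"
      by blast
    then have "t z \<le> sum t F"
      using insert by (intro member_le_sum) force+
    then have "9 \<le> t x * sum t F"
      using tx insert.prems(1)[of z] \<open>z \<in> F\<close> mult_mono[of 3 "t x" 3 "sum t F"] by simp
    moreover have "sum h F + 32 * int (card F) \<le> 2 * sum t F * (sum t F - 1) + 36"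
      using insert by simp
    ultimately show ?thesis
      using insert(1,2) hx by (simp add: algebra_simps)
  qed (use hx in simp)
qed simp

lemma sum_edges_lt_of_component_bounds:
  fixes c e :: "'a \<Rightarrow> nat"
  assumes "finite I" "B \<subseteq> I" "B \<noteq> {}" "k \<ge> 5"
    and "\<And>i. i \<in> I \<Longrightarrow> c i \<ge> 4"
    and "\<And>i. i \<in> B \<Longrightarrow> 4 * e i \<le> c i ^ 2"
    and "\<And>i. i \<in> I \<Longrightarrow> 2 * e i \<le> c i * (c i - 1)"
    and "sum c I \<le> k + card B"
  shows "2 * sum e I < k * (k - 1)"
proof -
  \<comment> \<open>Shifting the parts in \<open>B\<close> by one makes \<open>\<Sum>t \<le> k\<close>.\<close>
  define t where "t i = int (c i) - (if i \<in> B then 1 else 0)" for i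
  define h where "h i = (if i \<in> B then (t i + 1) ^ 2 else 2 * t i * (t i - 1))" for i
  have t_ge: "t i \<ge> 3" if "i \<in> I" for i
    using assms(5)[OF that] by (simp add: t_def)
  have e_le: "4 * int (e i) \<le> h i" if "i \<in> I" for i
  proof (cases "i \<in> B")
    case True
    then show ?thesis
      using assms(6)[OF True] by (simp add: h_def t_def flip: of_nat_power of_nat_mult)
  next
    case False
    have "int (2 * e i) \<le> int (c i * (c i - 1))"
      using assms(7)[OF that] by (simp only: of_nat_le_iff)
    with False assms(5)[OF that] show ?thesis
      by (simp add: h_def t_def)
  qed
  have h_le: "h i \<le> 2 * t i * (t i - 1) + 4" if "i \<in> I" for i
    using mult_nonneg_nonneg[of "t i - 1" "t i - 3"] t_ge[OF that]
    by (simp add: h_def power2_eq_square algebra_simps)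
  have "sum t I = int (sum c I) - int (card B)"
    using assms(1,2) by (simp add: t_def sum_subtractf sum.If_cases Int_absorb1)
  then have T: "sum t I \<le> int k"
    using assms(8) by linarith
  have "4 * int (sum e I) \<le> sum h I"
    using e_le by (simp add: sum_distrib_left sum_mono)
  moreover have "sum h I < 2 * int k * (int k - 1)"
  proof (cases "card I \<ge> 2")
    case True
    have "sum t I \<ge> 0"
      using t_ge by (intro sum_nonneg) fastforce
    then have "sum t I * (sum t I - 1) \<le> int k * (int k - 1)"
      using T mult_nonneg_nonneg[of "int k - sum t I" "int k + sum t I - 1"] assms(4)
      by (simp add: algebra_simps)
    moreover have "sum h I + 32 * int (card I) \<le> 2 * sum t I * (sum t I - 1) + 36"
      using assms(1) t_ge h_le by (rule sum_le_of_quadratic_bounds)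
    ultimately show ?thesis
      using True by linarith
  next
    case False
    have "card I \<noteq> 0"
      using assms(1-3) by auto
    with False have "card I = 1"
      by linarith
    then obtain i where I: "I = {i}"
      by (rule card_1_singletonE)
    then have "B = {i}"
      using assms(2,3) by auto
    with I have "sum h I = (t i + 1) ^ 2" "t i \<le> int k"
      using T by (simp_all add: h_def)
    moreover have "t i \<ge> 3"
      using t_ge I by simp
    ultimately have "sum h I \<le> (int k + 1) ^ 2"
      by (simp add: power_mono)
    also have "\<dots> < 2 * int k * (int k - 1)"
      using mult_mono[of 5 "int k" 1 "int k - 4"] assms(4)
      by (simp add: power2_eq_square algebra_simps)
    finally show ?thesis .
  qed
  ultimately have "int (2 * sum e I) < int (k * (k - 1))"
    using assms(4) by simp
  then show ?thesis
    by (simp only: of_nat_less_iff)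
qed

theorem lemma2:
  fixes E :: "'v::finite set set" and k :: nat
  assumes "simple_graph E"
    and "k > 4"
    and "\<forall>v. card (component E v) \<ge> 4"
    and "card E = k choose 2"
    and "incidence_rank E = k"
  shows "CARD('v) = k"
proof (rule ccontr)
  assume "CARD('v) \<noteq> k"
  moreover have "k \<le> CARD('v)" "CARD('v) \<le> k + card (kernel_components E)"
    using incidence_rank_add_dim_kernel[of E] dim_incidence_kernel_le[OF assms(1)] assms(5)
    by linarith+
  ultimately have "kernel_components E \<noteq> {}"
    by auto
  have "2 * (\<Sum>C\<in>graph_components E. card (edges_within E C)) < k * (k - 1)"
  proof (rule sum_edges_lt_of_component_bounds)
    show "kernel_components E \<subseteq> graph_components E"
      by (auto simp: kernel_components_def)
    show "(\<Sum>C\<in>graph_components E. card C) \<le> k + card (kernel_components E)"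
      using sum_card_graph_components[of E] \<open>CARD('v) \<le> k + card (kernel_components E)\<close>
      by simp
    show "4 \<le> card C" if "C \<in> graph_components E" for C
      using that assms(3) by (auto simp: graph_components_def)
    show "4 * card (edges_within E C) \<le> card C ^ 2" if "C \<in> kernel_components E" for C
      using card_edges_within_kernel_component[OF assms(1) that] .
    show "2 * card (edges_within E C) \<le> card C * (card C - 1)" for C
      using card_edges_within_le[OF assms(1)] by simp
  qed (use assms(2) \<open>kernel_components E \<noteq> {}\<close> in simp_all)
  moreover have "2 * card E = k * (k - 1)"
    using assms(4) two_mult_choose_two by simp
  ultimately show False
    using card_le_sum_edges_within[OF assms(1)] by linarith
qed

end
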